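(* Let $(M,d)$ be a metric space and $Y\subseteq M$. Let $\mathcal{N}$ be a $\sigma$-algebra of subsets of $Y$ containing all Borel subsets of $Y$, and let $\nu$ be a measure on $\mathcal{N}$ such that $\nu(B(x,r)\cap Y)<+\infty$ for all $x\in Y$, $r>0$. Let $\upsilon_Y\in]0,+\infty[$ and assume that $Y$ is upper $\upsilon_Y$-Ahlfors regular with respect to $Y$, with constants $r_0\in]0,+\infty]$, $c_0$ as in the definition, and that $\nu(Y)<+\infty$ whenever $r_0<+\infty$. Let $s_1,s_2\in[0,\upsilon_Y[$ and $a\in]0,+\infty[$. Then there exists $c\in]0,+\infty[$ such that \[ \int_{Y\cap B(\xi,a\,d(x',x''))}\frac{d\nu(\eta)}{d(\xi,\eta)^{s_1}d(\eta,y)^{s_2}} \leq c\left(d(x',y)^{-s_2}d(x',x'')^{\upsilon_Y-s_1}+d(x',y)^{-s_1}d(x',x'')^{\upsilon_Y-s_2}\right) \] for all $x',x''\in Y$ with $x'\neq x''$, all $\xi\in\{x',x''\}$ and all $y\in Y\setminus B(x',2d(x',x''))$.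
   Context: For $\xi\in M$, $r>0$, $B(\xi,r)=\{\eta\in M: d(\xi,\eta)<r\}$. $Y$ is upper $\upsilon$-Ahlfors regular with respect to $Y$ if there exist $r_0\in]0,+\infty]$, $c_0\in]0,+\infty[$ with $\nu(B(x,r)\cap Y)\leq c_0r^{\upsilon}$ for all $x\in Y$, $r\in]0,r_0[$. *)

theory Defs
  imports "HOL-Analysis.Analysis"
begin

text \<open>Real power with the convention t^0 = 1 (also for t = 0), and t^s = t powr s for s \<noteq> 0
  (so 0^s = 0 for s > 0).\<close>
definition rpow0 :: "real \<Rightarrow> real \<Rightarrow> real" where
  "rpow0 t s = (if s = 0 then 1 else t powr s)"

text \<open>The integrand 1/(d(xi,eta)^s1 d(eta,y)^s2) as an extended nonnegative real
  (1/0 = \<infinity>).\<close>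
definition kernel :: "'a::metric_space \<Rightarrow> 'a \<Rightarrow> real \<Rightarrow> real \<Rightarrow> 'a \<Rightarrow> ennreal" where
  "kernel xi y s1 s2 eta = inverse (ennreal (rpow0 (dist xi eta) s1 * rpow0 (dist eta y) s2))"

definition upper_ahlfors_regular ::
  "'a::metric_space measure \<Rightarrow> 'a set \<Rightarrow> real \<Rightarrow> ereal \<Rightarrow> real \<Rightarrow> bool" where
  "upper_ahlfors_regular \<nu> Y v r0 c0 \<longleftrightarrow> 0 < r0 \<and> 0 < c0 \<and>
     (\<forall>x\<in>Y. \<forall>r. 0 < r \<and> ereal r < r0 \<longrightarrow> emeasure \<nu> (ball x r \<inter> Y) \<le> ennreal (c0 * r powr v))"

end

theory Submission
  imports Defs
begin

text \<open>Write \<open>\<rho> = d(\<xi>, y)\<close>; since \<open>d(x', \<xi>) \<le> d(x', x'')\<close> and \<open>d(x', y) \<ge> 2 d(x', x'')\<close>, we have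
  \<open>\<rho> \<ge> d(x', y) / 2\<close>. Every \<open>\<eta>\<close> satisfies \<open>d(\<eta>, y) \<ge> \<rho>/2\<close> or \<open>d(\<xi>, \<eta>) \<ge> \<rho>/2\<close>: in the
  first case the factor \<open>d(\<eta>, y)^-s\<^sub>2\<close> is at most \<open>(\<rho>/2)^-s\<^sub>2\<close>, in the second \<open>d(\<xi>, \<eta>)^-s\<^sub>1\<close>
  is at most \<open>(\<rho>/2)^-s\<^sub>1\<close> and \<open>\<eta>\<close> lies within \<open>a d(x', x'')\<close> of \<open>y\<close>. This reduces the estimate
  to integrals of a single Riesz kernel \<open>d(x, \<eta>)^-s\<close> over balls \<open>B(x, R)\<close>. Cutting such a ball
  into dyadic shells and using \<open>\<nu>(B(x, r) \<inter> Y) \<le> C r^\<upsilon>\<close> for all radii (for large radii this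
  follows from \<open>\<nu>(Y) < \<infinity>\<close>) bounds that integral by the geometric series
  \<open>C 2^s R^(\<upsilon>-s) \<Sum>\<^sub>k 2^(k(s-\<upsilon>))\<close>, which converges because \<open>s < \<upsilon>\<close>.\<close>

definition riesz_kernel :: "'a::metric_space \<Rightarrow> real \<Rightarrow> 'a \<Rightarrow> ennreal" where
  "riesz_kernel x s \<eta> = inverse (ennreal (rpow0 (dist x \<eta>) s))"

lemma rpow0_nonneg: "0 \<le> rpow0 t s"
  unfolding rpow0_def by auto

lemma kernel_eq_riesz_kernel_mult:
  "kernel \<xi> y s1 s2 \<eta> = riesz_kernel \<xi> s1 \<eta> * riesz_kernel y s2 \<eta>"
  unfolding kernel_def riesz_kernel_def
  by (simp add: rpow0_nonneg dist_commute ennreal_mult ennreal_inverse_mult)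

lemma riesz_kernel_le:
  assumes "0 \<le> s" "0 < t" "t \<le> dist x \<eta>"
  shows "riesz_kernel x s \<eta> \<le> ennreal (t powr (- s))"
proof -
  have "t powr s \<le> rpow0 (dist x \<eta>) s"
    using assms by (auto simp: rpow0_def intro: powr_mono2)
  moreover have "0 < t powr s"
    using assms(2) by simp
  ultimately have "inverse (rpow0 (dist x \<eta>) s) \<le> t powr (- s)"
    by (simp add: powr_minus le_imp_inverse_le)
  moreover have "0 < rpow0 (dist x \<eta>) s"
    using \<open>0 < t powr s\<close> \<open>t powr s \<le> _\<close> by linarith
  ultimately show ?thesis
    unfolding riesz_kernel_def by (simp add: inverse_ennreal ennreal_leI)
qed

lemma borel_measurable_riesz_kernel: "riesz_kernel x s \<in> borel_measurable borel"
proof -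
  have "(\<lambda>\<eta>. dist x \<eta>) \<in> borel_measurable borel"
    by (intro borel_measurable_continuous_onI continuous_intros)
  then show ?thesis
    unfolding riesz_kernel_def rpow0_def by (cases "s = 0") simp_all
qed

lemma exists_dyadic_shell:
  fixes d R :: real
  assumes "0 < d" "d < R"
  obtains k :: nat where "R / 2 ^ Suc k \<le> d" "d < R / 2 ^ k"
proof -
  obtain n :: nat where "R / d < 2 ^ n"
    using real_arch_pow[of 2 "R / d"] by auto
  then have "R / 2 ^ n \<le> d"
    using assms by (simp add: field_simps)
  then obtain m where m: "R / 2 ^ m \<le> d" "\<And>i. i < m \<Longrightarrow> d < R / 2 ^ i"
    using ex_least_nat_le[of "\<lambda>m. R / 2 ^ m \<le> d"] by (auto simp: not_le)
  moreover have "m \<noteq> 0"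
    using m(1) assms by (intro notI) auto
  ultimately show thesis
    using that by (cases m) auto
qed

lemma riesz_kernel_le_dyadic_sum:
  assumes "0 \<le> s" and "\<eta> \<in> ball x R"
  shows "riesz_kernel x s \<eta>
           \<le> (\<Sum>k. ennreal ((R / 2 ^ Suc k) powr (- s)) * indicator (ball x (R / 2 ^ k)) \<eta>)"
proof (cases "\<eta> = x")
  case True
  have "R > 0" using assms(2) True by simp
  have "R / 2 ^ Suc k \<le> R / 2" for k
    using \<open>R > 0\<close> by (intro divide_left_mono) (auto simp: self_le_power)
  then have "(R / 2) powr (- s) \<le> (R / 2 ^ Suc k) powr (- s)" for k
    using assms(1) \<open>R > 0\<close> by (intro powr_mono2') auto
  then have "\<not> summable (\<lambda>k. (R / 2 ^ Suc k) powr (- s))"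
    using \<open>R > 0\<close> summable_comparison_test'[of "\<lambda>k. (R / 2 ^ Suc k) powr (- s)" 0 "\<lambda>_. (R / 2) powr (- s)"]
    by (auto simp: summable_const_iff)
  then have "(\<Sum>k. ennreal ((R / 2 ^ Suc k) powr (- s)) * indicator (ball x (R / 2 ^ k)) \<eta>) = \<infinity>"
    using True \<open>R > 0\<close> by (simp add: summable_iff_suminf_neq_top)
  then show ?thesis by simp
next
  case False
  then obtain k where k: "R / 2 ^ Suc k \<le> dist x \<eta>" "dist x \<eta> < R / 2 ^ k"
    using exists_dyadic_shell[of "dist x \<eta>" R] assms(2) by auto
  then have "riesz_kernel x s \<eta> \<le> ennreal ((R / 2 ^ Suc k) powr (- s)) * indicator (ball x (R / 2 ^ k)) \<eta>"
    using assms False by (simp add: riesz_kernel_le)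
  also have "\<dots> \<le> (\<Sum>k. ennreal ((R / 2 ^ Suc k) powr (- s)) * indicator (ball x (R / 2 ^ k)) \<eta>)"
    by (rule sum_le_suminf[where I = "{k}", simplified]) auto
  finally show ?thesis .
qed

lemma sets_Int_open:
  assumes "space \<nu> = Y" "sets (restrict_space borel Y) \<subseteq> sets \<nu>" "open U"
  shows "Y \<inter> U \<in> sets \<nu>"
  using assms by (auto simp: sets_restrict_space)

lemma borel_measurable_of_borel:
  assumes "space \<nu> = Y" "sets (restrict_space borel Y) \<subseteq> sets \<nu>"
    and "f \<in> borel_measurable borel"
  shows "f \<in> borel_measurable \<nu>"
proof -
  have "measurable (restrict_space borel Y) borel \<subseteq> measurable \<nu> borel"
    using assms(1,2) by (intro measurable_mono) (auto simp: space_restrict_space)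
  then show ?thesis
    using measurable_restrict_space1[OF assms(3)] by auto
qed

lemma upper_ahlfors_regular_all_radii:
  assumes space: "space \<nu> = Y" and AR: "upper_ahlfors_regular \<nu> Y v r0 c0"
    and fin_Y: "r0 < \<infinity> \<Longrightarrow> emeasure \<nu> Y < \<infinity>" and "0 < v"
  obtains C where "0 < C" "\<And>x r. x \<in> Y \<Longrightarrow> 0 < r \<Longrightarrow> emeasure \<nu> (ball x r \<inter> Y) \<le> ennreal (C * r powr v)"
proof (cases "r0 < \<infinity>")
  case False
  then show thesis
    using AR that[of c0] by (auto simp: upper_ahlfors_regular_def top.not_eq_extremum)
next
  case True
  from AR have "0 < c0" and small: "\<And>x r. x \<in> Y \<Longrightarrow> 0 < r \<Longrightarrow> ereal r < r0 \<Longrightarrow>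
      emeasure \<nu> (ball x r \<inter> Y) \<le> ennreal (c0 * r powr v)"
    unfolding upper_ahlfors_regular_def by auto
  obtain R0 where R0: "r0 = ereal R0" "0 < R0"
    using True AR by (cases r0) (auto simp: upper_ahlfors_regular_def)
  obtain M where M: "emeasure \<nu> Y = ennreal M" "0 \<le> M"
    using fin_Y[OF True] by (cases "emeasure \<nu> Y") auto
  define C where "C = c0 + M / R0 powr v"
  show thesis
  proof (rule that)
    show "0 < C"
      unfolding C_def using \<open>0 < c0\<close> M R0 by (auto intro!: add_pos_nonneg)
    fix x and r :: real assume "x \<in> Y" "0 < r"
    show "emeasure \<nu> (ball x r \<inter> Y) \<le> ennreal (C * r powr v)"
    proof (cases "r < R0")
      case True
      then have "emeasure \<nu> (ball x r \<inter> Y) \<le> ennreal (c0 * r powr v)"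
        using small \<open>x \<in> Y\<close> \<open>0 < r\<close> R0 by auto
      also have "\<dots> \<le> ennreal (C * r powr v)"
        unfolding C_def using M R0 by (intro ennreal_leI mult_right_mono) auto
      finally show ?thesis .
    next
      case False
      have "emeasure \<nu> (ball x r \<inter> Y) \<le> emeasure \<nu> Y"
        by (rule emeasure_mono) (auto simp flip: space)
      also have "\<dots> = ennreal (M / R0 powr v * R0 powr v)"
        using M R0 by simp
      also have "\<dots> \<le> ennreal (C * r powr v)"
        unfolding C_def using M R0 False \<open>0 < c0\<close> \<open>0 < v\<close>
        by (intro ennreal_leI mult_mono powr_mono2) auto
      finally show ?thesis .
    qed
  qed
qed

definition riesz_ball_const :: "real \<Rightarrow> real \<Rightarrow> real \<Rightarrow> real" where
  "riesz_ball_const C v s = C * 2 powr s / (1 - 2 powr (s - v))"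

lemma riesz_ball_const_pos: "0 < C \<Longrightarrow> s < v \<Longrightarrow> 0 < riesz_ball_const C v s"
  unfolding riesz_ball_const_def by (simp add: powr_less_one)

lemma riesz_kernel_ball_integral_le:
  assumes space: "space \<nu> = Y" and borel_sets: "sets (restrict_space borel Y) \<subseteq> sets \<nu>"
    and growth: "\<And>r. 0 < r \<Longrightarrow> emeasure \<nu> (ball x r \<inter> Y) \<le> ennreal (C * r powr v)"
    and "0 \<le> C" "0 \<le> s" "s < v" "0 < R"
  shows "(\<integral>\<^sup>+\<eta>\<in>Y \<inter> ball x R. riesz_kernel x s \<eta> \<partial>\<nu>)
           \<le> ennreal (riesz_ball_const C v s * R powr (v - s))"
proof -
  define q where "q = (2::real) powr (s - v)"
  have q: "0 < q" "q < 1"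
    using assms by (auto simp: q_def powr_less_one)
  define b where "b k = (R / 2 ^ Suc k) powr (- s)" for k :: nat
  define A where "A k = Y \<inter> ball x (R / 2 ^ k)" for k :: nat
  have A: "A k \<in> sets \<nu>" for k
    unfolding A_def by (intro sets_Int_open[OF space borel_sets]) auto
  have shell: "ennreal (b k) * emeasure \<nu> (A k) \<le> ennreal (C * 2 powr s * R powr (v - s) * q ^ k)"
    for k
  proof -
    have "emeasure \<nu> (A k) \<le> ennreal (C * (R / 2 ^ k) powr v)"
      unfolding A_def using growth[of "R / 2 ^ k"] \<open>0 < R\<close> by (simp add: Int_commute)
    then have "ennreal (b k) * emeasure \<nu> (A k) \<le> ennreal (b k) * ennreal (C * (R / 2 ^ k) powr v)"
      by (rule mult_left_mono) simp
    also have "\<dots> = ennreal (C * (b k * (R / 2 ^ k) powr v))"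
      using \<open>0 \<le> C\<close> by (simp add: b_def ennreal_mult'[symmetric] mult_ac)
    also have "b k * (R / 2 ^ k) powr v = 2 powr s * R powr (v - s) * q ^ k"
      using \<open>0 < R\<close> unfolding b_def q_def
      by (simp add: powr_divide powr_minus_divide powr_diff powr_add powr_mult
          flip: powr_realpow powr_powr) (simp add: field_simps powr_add powr_diff powr_powr ac_simps)
    finally show ?thesis
      by (simp add: mult_ac)
  qed
  have "(\<integral>\<^sup>+\<eta>\<in>Y \<inter> ball x R. riesz_kernel x s \<eta> \<partial>\<nu>) \<le> (\<integral>\<^sup>+\<eta>. (\<Sum>k. ennreal (b k) * indicator (A k) \<eta>) \<partial>\<nu>)"
    using riesz_kernel_le_dyadic_sum[OF \<open>0 \<le> s\<close>] space
    by (intro nn_integral_mono) (auto simp: A_def b_def indicator_def)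
  also have "\<dots> = (\<Sum>k. ennreal (b k) * emeasure \<nu> (A k))"
    using A by (simp add: nn_integral_suminf nn_integral_cmult_indicator)
  also have "\<dots> \<le> (\<Sum>k. ennreal (C * 2 powr s * R powr (v - s) * q ^ k))"
    by (intro suminf_le shell) auto
  also have "\<dots> = ennreal (\<Sum>k. C * 2 powr s * R powr (v - s) * q ^ k)"
    using q \<open>0 \<le> C\<close> by (intro suminf_ennreal2) (auto intro: summable_mult summable_geometric)
  also have "(\<Sum>k. C * 2 powr s * R powr (v - s) * q ^ k) = C * 2 powr s * R powr (v - s) / (1 - q)"
    using q by (simp add: suminf_mult suminf_geometric summable_geometric)
  also have "\<dots> = ennreal (riesz_ball_const C v s * R powr (v - s))"
    by (simp add: riesz_ball_const_def q_def)
  finally show ?thesis .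
qed

lemma kernel_le_split:
  assumes "0 \<le> s1" "0 \<le> s2" "0 < dist \<xi> y" "\<eta> \<in> ball \<xi> r"
  shows "kernel \<xi> y s1 s2 \<eta>
           \<le> ennreal ((dist \<xi> y / 2) powr (- s2)) * riesz_kernel \<xi> s1 \<eta>
             + ennreal ((dist \<xi> y / 2) powr (- s1)) * (riesz_kernel y s2 \<eta> * indicator (ball y r) \<eta>)"
    (is "_ \<le> ?near_\<xi> + ?near_y")
proof -
  define \<rho> where "\<rho> = dist \<xi> y"
  have tri: "\<rho> \<le> dist \<xi> \<eta> + dist y \<eta>"
    unfolding \<rho>_def by (metis dist_commute dist_triangle)
  show ?thesis
  proof (cases "\<rho> / 2 \<le> dist y \<eta>")
    case True
    then have "kernel \<xi> y s1 s2 \<eta> \<le> riesz_kernel \<xi> s1 \<eta> * ennreal ((\<rho> / 2) powr (- s2))"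
      unfolding kernel_eq_riesz_kernel_mult
      using assms by (intro mult_left_mono riesz_kernel_le) (auto simp: \<rho>_def)
    then show ?thesis
      by (simp add: \<rho>_def mult.commute add_increasing2)
  next
    case False
    then have "\<rho> / 2 \<le> dist \<xi> \<eta>" and "\<eta> \<in> ball y r"
      using tri assms(4) by auto
    then have "kernel \<xi> y s1 s2 \<eta> \<le> ennreal ((\<rho> / 2) powr (- s1)) * riesz_kernel y s2 \<eta>"
         and "indicator (ball y r) \<eta> = (1::ennreal)"
      unfolding kernel_eq_riesz_kernel_mult
      using assms by (auto intro!: mult_right_mono riesz_kernel_le simp: \<rho>_def)
    then show ?thesis
      by (simp add: \<rho>_def add_increasing)
  qed
qed

lemma kernel_ball_integral_le:
  assumes space: "space \<nu> = Y" and borel_sets: "sets (restrict_space borel Y) \<subseteq> sets \<nu>"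
    and "0 \<le> s1" "0 \<le> s2" "0 < dist \<xi> y"
  shows "(\<integral>\<^sup>+\<eta>\<in>Y \<inter> ball \<xi> r. kernel \<xi> y s1 s2 \<eta> \<partial>\<nu>)
           \<le> ennreal ((dist \<xi> y / 2) powr (- s2)) * (\<integral>\<^sup>+\<eta>\<in>Y \<inter> ball \<xi> r. riesz_kernel \<xi> s1 \<eta> \<partial>\<nu>)
             + ennreal ((dist \<xi> y / 2) powr (- s1)) * (\<integral>\<^sup>+\<eta>\<in>Y \<inter> ball y r. riesz_kernel y s2 \<eta> \<partial>\<nu>)"
proof -
  have sets: "Y \<inter> ball z r \<in> sets \<nu>" for z
    by (intro sets_Int_open[OF space borel_sets]) auto
  have meas: "riesz_kernel z s \<in> borel_measurable \<nu>" for z s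
    by (intro borel_measurable_of_borel[OF space borel_sets] borel_measurable_riesz_kernel)
  have "(\<integral>\<^sup>+\<eta>\<in>Y \<inter> ball \<xi> r. kernel \<xi> y s1 s2 \<eta> \<partial>\<nu>)
      \<le> (\<integral>\<^sup>+\<eta>. ennreal ((dist \<xi> y / 2) powr (- s2)) * (riesz_kernel \<xi> s1 \<eta> * indicator (Y \<inter> ball \<xi> r) \<eta>)
             + ennreal ((dist \<xi> y / 2) powr (- s1)) * (riesz_kernel y s2 \<eta> * indicator (Y \<inter> ball y r) \<eta>) \<partial>\<nu>)"
    using kernel_le_split[OF assms(3-5)] space
    by (intro nn_integral_mono) (auto simp: indicator_def)
  also have "\<dots> = ennreal ((dist \<xi> y / 2) powr (- s2)) * (\<integral>\<^sup>+\<eta>\<in>Y \<inter> ball \<xi> r. riesz_kernel \<xi> s1 \<eta> \<partial>\<nu>)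
             + ennreal ((dist \<xi> y / 2) powr (- s1)) * (\<integral>\<^sup>+\<eta>\<in>Y \<inter> ball y r. riesz_kernel y s2 \<eta> \<partial>\<nu>)"
    using sets meas by (simp add: nn_integral_add nn_integral_cmult)
  finally show ?thesis .
qed

lemma half_powr_neg_le:
  fixes L \<rho> s :: real
  assumes "0 < L" "L / 2 \<le> \<rho>" "0 \<le> s"
  shows "(\<rho> / 2) powr (- s) \<le> 4 powr s * L powr (- s)"
proof -
  have "(\<rho> / 2) powr (- s) \<le> (L / 4) powr (- s)"
    using assms by (intro powr_mono2') auto
  also have "\<dots> = 4 powr s * L powr (- s)"
    using assms(1) by (simp add: powr_divide powr_minus field_simps)
  finally show ?thesis .
qed

lemma kernel_integral_near_pair_le:
  assumes space: "space \<nu> = Y" and borel_sets: "sets (restrict_space borel Y) \<subseteq> sets \<nu>"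
    and growth: "\<And>x r. x \<in> Y \<Longrightarrow> 0 < r \<Longrightarrow> emeasure \<nu> (ball x r \<inter> Y) \<le> ennreal (C * r powr v)"
    and "0 < C" and s1: "0 \<le> s1" "s1 < v" and s2: "0 \<le> s2" "s2 < v" and "0 < a"
    and "x' \<in> Y" "x'' \<in> Y" "x' \<noteq> x''" and \<xi>: "\<xi> \<in> {x', x''}"
    and y: "y \<in> Y - ball x' (2 * dist x' x'')"
  shows "(\<integral>\<^sup>+\<eta>\<in>Y \<inter> ball \<xi> (a * dist x' x''). kernel \<xi> y s1 s2 \<eta> \<partial>\<nu>)
           \<le> ennreal ((riesz_ball_const C v s1 * 4 powr s2 * a powr (v - s1)
                       + riesz_ball_const C v s2 * 4 powr s1 * a powr (v - s2))
                      * (dist x' y powr (- s2) * dist x' x'' powr (v - s1)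
                         + dist x' y powr (- s1) * dist x' x'' powr (v - s2)))"
proof -
  define D L \<rho> where "D = dist x' x''" and "L = dist x' y" and "\<rho> = dist \<xi> y"
  define K1 K2 where "K1 = riesz_ball_const C v s1" and "K2 = riesz_ball_const C v s2"
  have "0 < D" "2 * D \<le> L" "\<xi> \<in> Y" "y \<in> Y"
    using \<open>x' \<in> Y\<close> \<open>x'' \<in> Y\<close> \<open>x' \<noteq> x''\<close> \<xi> y by (auto simp: D_def L_def)
  moreover have "L \<le> dist x' \<xi> + \<rho>" "dist x' \<xi> \<le> D"
    using \<xi> by (auto simp: L_def \<rho>_def D_def dist_triangle)
  ultimately have "L / 2 \<le> \<rho>" "0 < \<rho>"
    by linarith+
  have K: "0 < K1" "0 < K2"
    unfolding K1_def K2_def using \<open>0 < C\<close> s1 s2 by (auto intro: riesz_ball_const_pos)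
  have "(\<integral>\<^sup>+\<eta>\<in>Y \<inter> ball \<xi> (a * D). riesz_kernel \<xi> s1 \<eta> \<partial>\<nu>) \<le> ennreal (K1 * (a * D) powr (v - s1))"
       "(\<integral>\<^sup>+\<eta>\<in>Y \<inter> ball y (a * D). riesz_kernel y s2 \<eta> \<partial>\<nu>) \<le> ennreal (K2 * (a * D) powr (v - s2))"
    unfolding K1_def K2_def using \<open>0 < C\<close> s1 s2 \<open>0 < a\<close> \<open>0 < D\<close>
    by (intro riesz_kernel_ball_integral_le[OF space borel_sets growth] \<open>\<xi> \<in> Y\<close> \<open>y \<in> Y\<close>; simp)+
  then have "(\<integral>\<^sup>+\<eta>\<in>Y \<inter> ball \<xi> (a * D). kernel \<xi> y s1 s2 \<eta> \<partial>\<nu>)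
      \<le> ennreal ((\<rho> / 2) powr (- s2)) * ennreal (K1 * (a * D) powr (v - s1))
        + ennreal ((\<rho> / 2) powr (- s1)) * ennreal (K2 * (a * D) powr (v - s2))"
    using kernel_ball_integral_le[OF space borel_sets s1(1) s2(1), of \<xi> y "a * D"] \<open>0 < \<rho>\<close>
    unfolding \<rho>_def by (meson add_mono mult_left_mono order_trans zero_le)
  also have "\<dots> = ennreal ((\<rho> / 2) powr (- s2) * (K1 * (a * D) powr (v - s1))
                          + (\<rho> / 2) powr (- s1) * (K2 * (a * D) powr (v - s2)))"
    using K by (simp add: ennreal_mult ennreal_plus)
  also have "\<dots> \<le> ennreal ((4 powr s2 * L powr (- s2)) * (K1 * (a * D) powr (v - s1))
                          + (4 powr s1 * L powr (- s1)) * (K2 * (a * D) powr (v - s2)))"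
    using K s1 s2 half_powr_neg_le[OF _ \<open>L / 2 \<le> \<rho>\<close>] \<open>0 < D\<close> \<open>2 * D \<le> L\<close>
    by (intro ennreal_leI add_mono mult_right_mono) auto
  also have "\<dots> \<le> ennreal ((K1 * 4 powr s2 * a powr (v - s1) + K2 * 4 powr s1 * a powr (v - s2))
                          * (L powr (- s2) * D powr (v - s1) + L powr (- s1) * D powr (v - s2)))"
    using K \<open>0 < a\<close> \<open>0 < D\<close>
    by (intro ennreal_leI) (simp add: powr_mult algebra_simps add_increasing)
  finally show ?thesis
    by (simp add: D_def L_def K1_def K2_def)
qed

theorem lemma4p5:
  fixes \<nu> :: "'a::metric_space measure" and Y :: "'a set"
    and vY :: real and r0 :: ereal and c0 :: real and s1 s2 a :: real
  assumes space: "space \<nu> = Y"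
    and borel_sets: "sets (restrict_space borel Y) \<subseteq> sets \<nu>"
    and ball_fin: "\<And>x r. x \<in> Y \<Longrightarrow> 0 < r \<Longrightarrow> emeasure \<nu> (ball x r \<inter> Y) < \<infinity>"
    and vY_pos: "0 < vY"
    and AR: "upper_ahlfors_regular \<nu> Y vY r0 c0"
    and fin_Y: "r0 < \<infinity> \<Longrightarrow> emeasure \<nu> Y < \<infinity>"
    and s1: "0 \<le> s1" "s1 < vY"
    and s2: "0 \<le> s2" "s2 < vY"
    and a_pos: "0 < a"
  shows "\<exists>c>0. \<forall>x'\<in>Y. \<forall>x''\<in>Y. x' \<noteq> x'' \<longrightarrow>
           (\<forall>\<xi>\<in>{x', x''}. \<forall>y\<in>Y - ball x' (2 * dist x' x'').
              (\<integral>\<^sup>+ \<eta>\<in>(Y \<inter> ball \<xi> (a * dist x' x'')). kernel \<xi> y s1 s2 \<eta> \<partial>\<nu>)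
              \<le> ennreal (c * (dist x' y powr (- s2) * dist x' x'' powr (vY - s1)
                             + dist x' y powr (- s1) * dist x' x'' powr (vY - s2))))"
proof -
  obtain C where "0 < C" and growth:
      "\<And>x r. x \<in> Y \<Longrightarrow> 0 < r \<Longrightarrow> emeasure \<nu> (ball x r \<inter> Y) \<le> ennreal (C * r powr vY)"
    using upper_ahlfors_regular_all_radii[OF space AR fin_Y vY_pos] by blast
  define c where "c = riesz_ball_const C vY s1 * 4 powr s2 * a powr (vY - s1)
                      + riesz_ball_const C vY s2 * 4 powr s1 * a powr (vY - s2)"
  have "0 < c"
    unfolding c_def using \<open>0 < C\<close> s1 s2 a_pos by (simp add: riesz_ball_const_pos add_pos_pos)
  then show ?thesis
    using kernel_integral_near_pair_le[OF space borel_sets growth \<open>0 < C\<close> s1 s2 a_pos]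
    unfolding c_def by blast
qed

end
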